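(* Let $k\ge 1$ be an integer and $q=2^{-1/k}$. Let $T_k$ be any binary prefix code for the finite set $\mathcal{A}_k=\{(i,j):0\le i,j<k\}$ that is optimal (minimizes $\sum_{(i,j)\in\mathcal{A}_k} q^{i+j}|T_k(i,j)|$) for the weights $w(i,j)=q^{i+j}$ (for $k=1$, $T_1$ assigns the empty word to the single symbol). Then the code $$C_k(i,j)=T_k(i\bmod k,\ j\bmod k)\cdot G_1(\lfloor i/k\rfloor)\cdot G_1(\lfloor j/k\rfloor),\qquad i,j\ge0,$$ where $\cdot$ denotes concatenation of binary strings and $G_1(n)$ is the unary codeword ($n$ ones followed by a zero), is an optimal prefix code for $\mathrm{TDGD}(q)$.
   Context: $\mathcal{A}=\{(i,j): i,j\in\mathbb{Z}_{\ge 0}\}$; $\mathrm{TDGD}(q)$ is the distribution $P(i,j)=(1-q)^2q^{i+j}$ on $\mathcal{A}$. A code is optimal for $\mathrm{TDGD}(q)$ if it minimizes the expected codeword length among all binary prefix codes for $\mathcal{A}$. *)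

theory Defs
  imports "HOL-Analysis.Analysis" "HOL-Library.Sublist"
begin

definition prefix_code :: "'a set \<Rightarrow> ('a \<Rightarrow> bool list) \<Rightarrow> bool" where
  "prefix_code A c \<longleftrightarrow> (\<forall>x\<in>A. \<forall>y\<in>A. x \<noteq> y \<longrightarrow> \<not> prefix (c x) (c y))"

definition alphabet_k :: "nat \<Rightarrow> (nat \<times> nat) set" where
  "alphabet_k k = {0..<k} \<times> {0..<k}"

definition weighted_len_k :: "nat \<Rightarrow> real \<Rightarrow> (nat \<times> nat \<Rightarrow> bool list) \<Rightarrow> real" where
  "weighted_len_k k q c = (\<Sum>(i,j)\<in>alphabet_k k. q ^ (i + j) * real (length (c (i,j))))"

definition optimal_finite_code :: "nat \<Rightarrow> real \<Rightarrow> (nat \<times> nat \<Rightarrow> bool list) \<Rightarrow> bool" where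
  "optimal_finite_code k q c \<longleftrightarrow> prefix_code (alphabet_k k) c \<and>
     (\<forall>d. prefix_code (alphabet_k k) d \<longrightarrow> weighted_len_k k q c \<le> weighted_len_k k q d)"

definition TDGD :: "real \<Rightarrow> nat \<times> nat \<Rightarrow> real" where
  "TDGD q = (\<lambda>(i,j). (1 - q)^2 * q ^ (i + j))"

definition expected_len :: "real \<Rightarrow> (nat \<times> nat \<Rightarrow> bool list) \<Rightarrow> ennreal" where
  "expected_len q c = (\<integral>\<^sup>+ x. ennreal (TDGD q x * real (length (c x))) \<partial>count_space UNIV)"

definition optimal_TDGD :: "real \<Rightarrow> (nat \<times> nat \<Rightarrow> bool list) \<Rightarrow> bool" where
  "optimal_TDGD q c \<longleftrightarrow> prefix_code UNIV c \<and>
     (\<forall>d. prefix_code UNIV d \<longrightarrow> expected_len q c \<le> expected_len q d)"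

definition unary :: "nat \<Rightarrow> bool list" where
  "unary n = replicate n True @ [False]"

end

theory Submission
  imports Defs
begin

(*
  The proof compares C_k with an auxiliary code C' obtained by the same construction from a code c
  on A_k whose lengths m are "threshold lengths": k * m(r,s) <= J + r + s <= k * (m(r,s) + 1) for
  one offset J, i.e. m(r,s) is (J + r + s)/k rounded, and whose Kraft sum is exactly 1.
  (1) TDGD(q)(i,j) factors into q^(i mod k + j mod k) times a function of (i div k, j div k), so
      the optimality of T_k for the weights q^(r+s) makes C_k at least as good as C'.
  (2) C' is optimal by Lagrangian duality: writing TDGD(q)(x) = lam * q^(t x) with
      t(i,j) = J + 2k + i + j, the threshold property gives 2^-(L+1) <= q^t <= 2^-L for the
      length L of C'(x), so L minimises n |-> TDGD(q)(x) * n + lam * 2^-n.  Summing this over a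
      finite square, the Kraft inequality for a competitor d and Kraft sum (1 - 2^-N)^2 -> 1 for C'
      bound the truncated cost of C' by that of d up to an error vanishing as N -> infinity.
*)

section \<open>Kraft inequality and its converse\<close>

text \<open>Binary words of length n extending u; there are 2^(n - length u) of them.  Counting such
  extensions gives both directions of the Kraft inequality.\<close>
definition extensions :: "nat \<Rightarrow> bool list \<Rightarrow> bool list set" where
  "extensions n u = {w. length w = n \<and> prefix u w}"

lemma card_extensions:
  assumes "length u \<le> n"
  shows "card (extensions n u) = 2 ^ (n - length u)"
proof -
  have "extensions n u = (\<lambda>v. u @ v) ` {v. length v = n - length u}"
    using assms by (auto simp: extensions_def prefix_def)
  moreover have "inj (\<lambda>v::bool list. u @ v)" by (simp add: inj_def)
  moreover have "card {v::bool list. length v = n - length u} = 2 ^ (n - length u)"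
    using card_lists_length_eq[of "UNIV :: bool set" "n - length u"] by simp
  ultimately show ?thesis
    by (simp add: card_image inj_on_subset)
qed

lemma finite_extensions: "finite (extensions n u)"
proof -
  have "extensions n u \<subseteq> {w. set w \<subseteq> UNIV \<and> length w = n}" by (auto simp: extensions_def)
  then show ?thesis using finite_lists_length_eq[of "UNIV :: bool set" n] finite_subset by auto
qed

text \<open>Kraft inequality: distinct codewords of a prefix code have disjoint sets of extensions
  to a common length n, so their counts 2^(n - length) add up to at most 2^n.\<close>
lemma kraft_inequality:
  assumes code: "prefix_code A c" and "finite F" and "F \<subseteq> A"
  shows "(\<Sum>x\<in>F. (1/2::real) ^ length (c x)) \<le> 1"
proof -
  define n where "n = Max (insert 0 ((\<lambda>x. length (c x)) ` F))"
  have len: "length (c x) \<le> n" if "x \<in> F" for x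
    unfolding n_def using \<open>finite F\<close> that by (intro Max_ge) auto
  have disj: "extensions n (c x) \<inter> extensions n (c y) = {}" if "x \<in> F" "y \<in> F" "x \<noteq> y" for x y
  proof -
    have "\<not> prefix (c x) (c y)" "\<not> prefix (c y) (c x)"
      using code that \<open>F \<subseteq> A\<close> unfolding prefix_code_def by (metis subsetD)+
    then show ?thesis unfolding extensions_def by (auto dest: prefix_same_cases)
  qed
  have "(\<Sum>x\<in>F. 2 ^ (n - length (c x))) = (\<Sum>x\<in>F. card (extensions n (c x)))"
    by (intro sum.cong refl) (simp add: card_extensions len)
  also have "\<dots> = card (\<Union>x\<in>F. extensions n (c x))"
    by (rule card_UN_disjoint[symmetric]) (use disj \<open>finite F\<close> finite_extensions in auto)
  also have "\<dots> \<le> card (extensions n [])"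
    by (intro card_mono finite_extensions) (auto simp: extensions_def)
  also have "\<dots> = 2 ^ n" by (simp add: card_extensions)
  finally have "real (\<Sum>x\<in>F. 2 ^ (n - length (c x))) \<le> real (2 ^ n)" by (rule of_nat_mono)
  then have "(\<Sum>x\<in>F. 2 ^ (n - length (c x))) \<le> (2::real) ^ n" by simp
  moreover have "(2::real) ^ (n - length (c x)) = 2 ^ n * (1/2) ^ length (c x)" if "x \<in> F" for x
    using len[OF that] by (simp add: power_diff power_one_over field_simps)
  ultimately have "(2::real) ^ n * (\<Sum>x\<in>F. (1/2) ^ length (c x)) \<le> 2 ^ n * 1"
    by (simp add: sum_distrib_left)
  then show ?thesis by (rule mult_left_le_imp_le) simp
qed

text \<open>Codewords of length at most L with Kraft sum at most 1 - 2^-L have fewer than 2^L extensions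
  to length L, so some word of length L extends none of them.\<close>
lemma exists_word_avoiding_prefixes:
  fixes c :: "'a \<Rightarrow> bool list"
  assumes "finite S" and len: "\<forall>y\<in>S. length (c y) \<le> L"
    and kraft: "(\<Sum>y\<in>S. (1/2::real) ^ length (c y)) \<le> 1 - (1/2) ^ L"
  shows "\<exists>w. length w = L \<and> (\<forall>y\<in>S. \<not> prefix (c y) w)"
proof -
  define covered where "covered = (\<Union>y\<in>S. extensions L (c y))"
  have "card covered \<le> (\<Sum>y\<in>S. card (extensions L (c y)))"
    unfolding covered_def by (rule card_UN_le) (rule \<open>finite S\<close>)
  also have "\<dots> = (\<Sum>y\<in>S. 2 ^ (L - length (c y)))"
    using len by (intro sum.cong refl) (simp add: card_extensions)
  finally have "real (card covered) \<le> real (\<Sum>y\<in>S. 2 ^ (L - length (c y)))" by (rule of_nat_mono)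
  also have "\<dots> = (\<Sum>y\<in>S. (2::real) ^ (L - length (c y)))" by simp
  also have "\<dots> = 2 ^ L * (\<Sum>y\<in>S. (1/2::real) ^ length (c y))"
    unfolding sum_distrib_left using len
    by (intro sum.cong refl) (simp add: power_diff power_one_over field_simps)
  also have "\<dots> \<le> 2 ^ L * (1 - (1/2) ^ L)"
    using kraft by (intro mult_left_mono) auto
  also have "\<dots> < 2 ^ L" by (simp add: right_diff_distrib power_one_over)
  finally have "card covered < card (extensions L [])" by (simp add: card_extensions)
  moreover have "finite covered" unfolding covered_def using \<open>finite S\<close> finite_extensions by blast
  ultimately have "\<not> extensions L [] \<subseteq> covered" using card_mono leD by blast
  then show ?thesis unfolding covered_def extensions_def by auto
qed

lemma prefix_code_insert:
  fixes c :: "'a \<Rightarrow> bool list"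
  assumes code: "prefix_code S c" and "x \<notin> S"
    and len: "\<forall>y\<in>S. length (c y) \<le> length w" and avoid: "\<forall>y\<in>S. \<not> prefix (c y) w"
  shows "prefix_code (insert x S) (c(x := w))"
  unfolding prefix_code_def
proof (intro ballI impI notI)
  fix u v assume uv: "u \<in> insert x S" "v \<in> insert x S" "u \<noteq> v"
    and pre: "prefix ((c(x := w)) u) ((c(x := w)) v)"
  consider "u = x" "v \<in> S" | "u \<in> S" "v = x" | "u \<in> S" "v \<in> S" "u \<noteq> x" "v \<noteq> x"
    using uv \<open>x \<notin> S\<close> by auto
  then show False
  proof cases
    case 1
    then have "v \<noteq> x" using \<open>x \<notin> S\<close> by auto
    then have "prefix w (c v)" "length (c v) \<le> length w" using 1 pre len by auto
    then have "w = c v" by (auto simp: prefix_def)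
    then show False using avoid \<open>v \<in> S\<close> by auto
  next
    case 2
    then have "u \<noteq> x" using \<open>x \<notin> S\<close> by auto
    then show False using 2 pre avoid by auto
  next
    case 3
    then show False using pre code uv(3) unfolding prefix_code_def by auto
  qed
qed

text \<open>Converse of the Kraft inequality, by induction adding symbols in order of increasing length;
  each new symbol receives a word avoiding the codewords already placed.\<close>
lemma kraft_converse:
  fixes m :: "'a \<Rightarrow> nat"
  assumes "finite A" and "(\<Sum>x\<in>A. (1/2::real) ^ m x) \<le> 1"
  shows "\<exists>c. prefix_code A c \<and> (\<forall>x\<in>A. length (c x) = m x)"
  using assms
proof (induction A rule: finite_ranking_induct[where f = m])
  case empty
  show ?case by (simp add: prefix_code_def)
next
  case (insert x S)
  show ?case
  proof (cases "x \<in> S")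
    case True
    then show ?thesis using insert by (simp add: insert_absorb)
  next
    case False
    have kraft_S: "(\<Sum>y\<in>S. (1/2::real) ^ m y) \<le> 1 - (1/2) ^ m x"
      using insert.prems False \<open>finite S\<close> by simp
    moreover have "(0::real) \<le> (1/2) ^ m x" by simp
    ultimately have "(\<Sum>y\<in>S. (1/2::real) ^ m y) \<le> 1" by linarith
    then obtain c where code: "prefix_code S c" and len: "\<forall>y\<in>S. length (c y) = m y"
      using insert.IH by blast
    have "\<exists>w. length w = m x \<and> (\<forall>y\<in>S. \<not> prefix (c y) w)"
      using \<open>finite S\<close> len insert.hyps(2) kraft_S by (intro exists_word_avoiding_prefixes) simp_all
    then obtain w where w: "length w = m x" "\<forall>y\<in>S. \<not> prefix (c y) w" by blast
    have "prefix_code (insert x S) (c(x := w))"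
      using code False len insert.hyps(2) w by (intro prefix_code_insert) simp_all
    moreover have "\<forall>y\<in>insert x S. length ((c(x := w)) y) = m y"
      using len w(1) False by auto
    ultimately show ?thesis by blast
  qed
qed

section \<open>The product code\<close>

lemma finite_alphabet_k: "finite (alphabet_k k)"
  unfolding alphabet_k_def by simp

lemma unary_0 [simp]: "unary 0 = [False]"
  and unary_Suc [simp]: "unary (Suc n) = True # unary n"
  and length_unary [simp]: "length (unary n) = Suc n"
  by (simp_all add: unary_def)

definition tdgd_code :: "nat \<Rightarrow> (nat \<times> nat \<Rightarrow> bool list) \<Rightarrow> nat \<times> nat \<Rightarrow> bool list" where
  "tdgd_code k T = (\<lambda>(i,j). T (i mod k, j mod k) @ unary (i div k) @ unary (j div k))"

definition block_len :: "nat \<Rightarrow> (nat \<times> nat \<Rightarrow> nat) \<Rightarrow> nat \<times> nat \<Rightarrow> nat" where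
  "block_len k len = (\<lambda>(i,j). len (i mod k, j mod k) + i div k + j div k + 2)"

lemma length_tdgd_code: "length (tdgd_code k T x) = block_len k (\<lambda>c. length (T c)) x"
  by (cases x) (simp add: tdgd_code_def block_len_def)

lemma unary_prefix: "prefix (unary a @ X) (unary b @ Y) \<Longrightarrow> a = b \<and> prefix X Y"
proof (induction a arbitrary: b)
  case 0
  then show ?case by (cases b) auto
next
  case (Suc a)
  then show ?case by (cases b) auto
qed

lemma tdgd_code_prefix_code:
  assumes "k \<ge> 1" and code: "prefix_code (alphabet_k k) T"
  shows "prefix_code UNIV (tdgd_code k T)"
  unfolding prefix_code_def
proof (intro ballI impI notI)
  fix x y :: "nat \<times> nat"
  assume ne: "x \<noteq> y" and pre: "prefix (tdgd_code k T x) (tdgd_code k T y)"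
  obtain i j i' j' where xy: "x = (i,j)" "y = (i',j')" by fastforce
  define c c' where "c = (i mod k, j mod k)" and "c' = (i' mod k, j' mod k)"
  have in_alph: "c \<in> alphabet_k k" "c' \<in> alphabet_k k"
    unfolding c_def c'_def alphabet_k_def using \<open>k \<ge> 1\<close> by auto
  have pre': "prefix (T c @ unary (i div k) @ unary (j div k)) (T c' @ unary (i' div k) @ unary (j' div k))"
    using pre by (simp add: tdgd_code_def c_def c'_def xy)
  show False
  proof (cases "c = c'")
    case False
    have "prefix (T c) (T c' @ unary (i' div k) @ unary (j' div k))"
      using pre' by (rule append_prefixD)
    moreover have "prefix (T c') (T c' @ unary (i' div k) @ unary (j' div k))" by simp
    ultimately have "prefix (T c) (T c') \<or> prefix (T c') (T c)" by (rule prefix_same_cases)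
    moreover have "\<not> prefix (T c) (T c')" "\<not> prefix (T c') (T c)"
      using code in_alph False unfolding prefix_code_def by auto
    ultimately show False by blast
  next
    case True
    then have "prefix (unary (i div k) @ unary (j div k)) (unary (i' div k) @ unary (j' div k))"
      using pre' by simp
    from unary_prefix[OF this]
    have "i div k = i' div k" and "prefix (unary (j div k) @ []) (unary (j' div k) @ [])" by auto
    then have "i div k = i' div k" "j div k = j' div k" using unary_prefix by blast+
    moreover have "i mod k = i' mod k" "j mod k = j' mod k"
      using True by (auto simp: c_def c'_def)
    ultimately have "i = i'" "j = j'" by (metis div_mult_mod_eq)+
    then show False using ne xy by simp
  qed
qed

section \<open>Threshold lengths with Kraft sum one\<close>

text \<open>Lengths on A_k are assigned in three levels (up to a common shift) according to the position
  of r + s + rho relative to k and 2k.  Symbols tied exactly on the lower (r + s + rho = k) or upper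
  (r + s + rho = 2k) boundary are promoted to the next level one at a time: the first i lower and
  the first j upper tied symbols, ordered by r.\<close>
definition level :: "nat \<Rightarrow> nat \<Rightarrow> nat \<Rightarrow> nat \<Rightarrow> nat \<Rightarrow> nat \<Rightarrow> nat" where
  "level k \<rho> i j r s =
     (if r + s + \<rho> < k then 1
      else if r + s + \<rho> = k then (if r < i then 2 else 1)
      else if r + s + \<rho> < 2 * k then 2
      else if r + s + \<rho> = 2 * k then (if r < k + 1 - \<rho> + j then 3 else 2)
      else 3)"

text \<open>Kraft sum of a level assignment, scaled by 8 to be a natural number.\<close>
definition level_count :: "nat \<Rightarrow> nat \<Rightarrow> nat \<Rightarrow> nat \<Rightarrow> nat" where
  "level_count k \<rho> i j = (\<Sum>(r,s)\<in>alphabet_k k. 2 ^ (3 - level k \<rho> i j r s))"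

lemma sum_alphabet_k: "(\<Sum>(r,s)\<in>alphabet_k k. f r s) = (\<Sum>r<k. \<Sum>s<k. f r s)"
  unfolding alphabet_k_def atLeast0LessThan by (simp add: sum.cartesian_product)

lemma sum_threshold:
  fixes a b :: nat
  assumes "t \<le> n"
  shows "(\<Sum>s<n. if s < t then a else b) = a * t + b * (n - t)"
  using assms
proof (induction n)
  case 0
  then show ?case by simp
next
  case (Suc n)
  show ?case
  proof (cases "t = Suc n")
    case True
    then have "(\<Sum>s<Suc n. if s < t then a else b) = (\<Sum>s<Suc n. a)" by (intro sum.cong) auto
    then show ?thesis using True by simp
  next
    case False
    then have "t \<le> n" using Suc.prems by simp
    then show ?thesis using Suc.IH by (simp add: Suc_diff_le)
  qed
qed

lemma double_sum_countdown: "2 * (\<Sum>r<n. n - r) = n * (n + 1 :: nat)"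
proof (induction n)
  case 0
  then show ?case by simp
next
  case (Suc n)
  have "(\<Sum>r<Suc n. Suc n - r) = (\<Sum>r<n. (n - r) + 1) + 1"
    by (simp add: Suc_diff_le less_imp_le)
  also have "\<dots> = (\<Sum>r<n. n - r) + n + 1" by (subst sum.distrib) simp
  finally show ?case using Suc.IH by (simp add: algebra_simps)
qed

text \<open>At rho = 1 no symbol is on the top level; at rho = k + 1 none is on the bottom level, and
  this assignment is the one for rho = 1 shifted by one level, halving its Kraft sum.\<close>
lemma level_count_first: "level_count k 1 0 0 = 2 * k\<^sup>2 + k * (k + 1)"
proof -
  have "level_count k 1 0 0 = (\<Sum>r<k. \<Sum>s<k. if s < k - r then 4 else 2)"
    unfolding level_count_def sum_alphabet_k by (intro sum.cong refl) (auto simp: level_def)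
  also have "\<dots> = (\<Sum>r<k. 2 * k + 2 * (k - r))"
    by (intro sum.cong refl) (auto simp: sum_threshold)
  also have "\<dots> = 2 * k\<^sup>2 + 2 * (\<Sum>r<k. k - r)"
    by (simp add: sum.distrib sum_distrib_left power2_eq_square)
  finally show ?thesis using double_sum_countdown[of k] by simp
qed

lemma level_count_last: "2 * level_count k (k + 1) 0 0 = 2 * k\<^sup>2 + k * (k + 1)"
proof -
  have "level_count k (k + 1) 0 0 = (\<Sum>r<k. \<Sum>s<k. if s < k - r then 2 else 1)"
    unfolding level_count_def sum_alphabet_k by (intro sum.cong refl) (auto simp: level_def)
  also have "\<dots> = (\<Sum>r<k. k + (k - r))"
    by (intro sum.cong refl) (auto simp: sum_threshold)
  also have "\<dots> = (\<Sum>r<k. k) + (\<Sum>r<k. k - r)" by (rule sum.distrib)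
  also have "\<dots> = k\<^sup>2 + (\<Sum>r<k. k - r)" by (simp add: power2_eq_square)
  finally show ?thesis using double_sum_countdown[of k] by simp
qed

lemma sum_change_one_point:
  fixes f g :: "'a \<Rightarrow> nat"
  assumes "finite A" "z \<in> A" "\<And>c. c \<in> A \<Longrightarrow> c \<noteq> z \<Longrightarrow> f c = g c" "f z = g z + d"
  shows "sum f A = sum g A + d"
proof -
  have "sum f A = f z + sum f (A - {z})" using assms by (simp add: sum.remove)
  also have "sum f (A - {z}) = sum g (A - {z})" using assms(3) by (intro sum.cong) auto
  also have "sum g A = g z + sum g (A - {z})" using assms by (simp add: sum.remove)
  ultimately show ?thesis using assms(4) by simp
qed

lemma level_count_step_lower:
  assumes "1 \<le> \<rho>" "\<rho> \<le> k" "i < k + 1 - \<rho>"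
  shows "level_count k \<rho> i j = level_count k \<rho> (Suc i) j + 2"
  unfolding level_count_def
proof (rule sum_change_one_point[OF finite_alphabet_k, where z = "(i, k - \<rho> - i)"])
  show "(i, k - \<rho> - i) \<in> alphabet_k k" unfolding alphabet_k_def using assms by auto
  show "(case (i, k - \<rho> - i) of (r, s) \<Rightarrow> 2 ^ (3 - level k \<rho> i j r s)) =
    (case (i, k - \<rho> - i) of (r, s) \<Rightarrow> 2 ^ (3 - level k \<rho> (Suc i) j r s)) + (2::nat)"
    using assms by (simp add: level_def)
  fix c assume "c \<in> alphabet_k k" "c \<noteq> (i, k - \<rho> - i)"
  then show "(case c of (r, s) \<Rightarrow> (2::nat) ^ (3 - level k \<rho> i j r s)) =
    (case c of (r, s) \<Rightarrow> 2 ^ (3 - level k \<rho> (Suc i) j r s))"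
    using assms by (cases c) (auto simp: level_def alphabet_k_def)
qed

lemma level_count_step_upper:
  assumes "1 \<le> \<rho>" "\<rho> \<le> k" "j < \<rho> - 1"
  shows "level_count k \<rho> i j = level_count k \<rho> i (Suc j) + 1"
  unfolding level_count_def
proof (rule sum_change_one_point[OF finite_alphabet_k, where z = "(k + 1 - \<rho> + j, k - 1 - j)"])
  show "(k + 1 - \<rho> + j, k - 1 - j) \<in> alphabet_k k" unfolding alphabet_k_def using assms by auto
  show "(case (k + 1 - \<rho> + j, k - 1 - j) of (r, s) \<Rightarrow> 2 ^ (3 - level k \<rho> i j r s)) =
    (case (k + 1 - \<rho> + j, k - 1 - j) of (r, s) \<Rightarrow> 2 ^ (3 - level k \<rho> i (Suc j) r s)) + (1::nat)"
    using assms by (simp add: level_def)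
  fix c assume "c \<in> alphabet_k k" "c \<noteq> (k + 1 - \<rho> + j, k - 1 - j)"
  then show "(case c of (r, s) \<Rightarrow> (2::nat) ^ (3 - level k \<rho> i j r s)) =
    (case c of (r, s) \<Rightarrow> 2 ^ (3 - level k \<rho> i (Suc j) r s))"
    using assms by (cases c) (auto simp: level_def alphabet_k_def)
qed

lemma level_count_next_threshold:
  assumes "1 \<le> \<rho>" "\<rho> \<le> k"
  shows "level_count k (Suc \<rho>) 0 0 = level_count k \<rho> (k + 1 - \<rho>) (\<rho> - 1)"
  unfolding level_count_def
proof (intro sum.cong refl)
  fix c assume "c \<in> alphabet_k k"
  then show "(case c of (r, s) \<Rightarrow> (2::nat) ^ (3 - level k (Suc \<rho>) 0 0 r s)) =
    (case c of (r, s) \<Rightarrow> 2 ^ (3 - level k \<rho> (k + 1 - \<rho>) (\<rho> - 1) r s))"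
    using assms by (cases c) (auto simp: level_def alphabet_k_def)
qed

lemma level_count_promote:
  assumes "1 \<le> \<rho>" "\<rho> \<le> k" "i \<le> k + 1 - \<rho>" "j \<le> \<rho> - 1"
  shows "level_count k \<rho> i j + 2 * i + j = level_count k \<rho> 0 0"
proof -
  have upper: "level_count k \<rho> i j' + j' = level_count k \<rho> i 0" if "j' \<le> \<rho> - 1" for j'
    using that
  proof (induction j')
    case (Suc j')
    then show ?case using level_count_step_upper[OF assms(1,2), of j' i] by simp
  qed simp
  have lower: "level_count k \<rho> i' 0 + 2 * i' = level_count k \<rho> 0 0" if "i' \<le> k + 1 - \<rho>" for i'
    using that
  proof (induction i')
    case (Suc i')
    then show ?case using level_count_step_lower[OF assms(1,2), of i' 0] by simp
  qed simp
  show ?thesis using upper[OF assms(4)] lower[OF assms(3)] by simp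
qed

lemma split_gap:
  fixes D I J :: nat
  assumes "D < 2 * I + J" and "J = 0 \<Longrightarrow> even D"
  shows "\<exists>i\<le>I. \<exists>j\<le>J. D = 2 * i + j"
proof (cases "D div 2 \<le> I")
  case True
  have "D mod 2 \<le> J" using assms(2) by (cases "J = 0") auto
  then show ?thesis using True by (metis div_mult_mod_eq mult.commute)
next
  case False
  then have "D = 2 * I + (D - 2 * I)" "D - 2 * I \<le> J" using assms(1) by auto
  then show ?thesis by blast
qed

text \<open>Discrete intermediate value argument: the scaled Kraft sum decreases along the promotion
  steps from its value at rho = 1 to its value at rho = k + 1, by steps of 2 and 1, and therefore
  hits every even number in between; this is where a power of two is hit exactly.\<close>
lemma level_count_hits:
  assumes "k \<ge> 1" and "even P"
    and "level_count k (k + 1) 0 0 < P" and "P \<le> level_count k 1 0 0"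
  shows "\<exists>\<rho> i j. 1 \<le> \<rho> \<and> \<rho> \<le> k \<and> level_count k \<rho> i j = P"
proof -
  define S where "S = {\<rho> \<in> {1..k}. P \<le> level_count k \<rho> 0 0}"
  have "1 \<in> S" "finite S" unfolding S_def using assms by auto
  define \<rho> where "\<rho> = Max S"
  have "\<rho> \<in> S" unfolding \<rho>_def using \<open>1 \<in> S\<close> \<open>finite S\<close> Max_in by blast
  then have \<rho>: "1 \<le> \<rho>" "\<rho> \<le> k" and above: "P \<le> level_count k \<rho> 0 0" unfolding S_def by auto
  have below: "level_count k (Suc \<rho>) 0 0 < P"
  proof (cases "Suc \<rho> \<le> k")
    case True
    have "Suc \<rho> \<notin> S" using Max_ge[OF \<open>finite S\<close>] unfolding \<rho>_def by fastforce
    then show ?thesis unfolding S_def using True by auto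
  next
    case False
    then have "\<rho> = k" using \<rho> by simp
    then show ?thesis using assms(3) by simp
  qed
  define D where "D = level_count k \<rho> 0 0 - P"
  have "level_count k \<rho> 0 0 = level_count k (Suc \<rho>) 0 0 + 2 * (k + 1 - \<rho>) + (\<rho> - 1)"
    using level_count_next_threshold[OF \<rho>] level_count_promote[OF \<rho>, of "k + 1 - \<rho>" "\<rho> - 1"]
    by simp
  then have "D < 2 * (k + 1 - \<rho>) + (\<rho> - 1)" using below above unfolding D_def by simp
  moreover have "even D" if "\<rho> - 1 = 0"
  proof -
    have "\<rho> = 1" using that \<rho> by simp
    then have "even (level_count k \<rho> 0 0)" using level_count_first[of k] by simp
    then show ?thesis unfolding D_def using assms(2) above by (simp add: even_diff_nat)
  qed
  ultimately have "\<exists>i\<le>k + 1 - \<rho>. \<exists>j\<le>\<rho> - 1. D = 2 * i + j" by (rule split_gap)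
  then obtain i j where ij: "i \<le> k + 1 - \<rho>" "j \<le> \<rho> - 1" "D = 2 * i + j" by blast
  have "level_count k \<rho> i j = P"
    using level_count_promote[OF \<rho> ij(1,2)] above ij(3) unfolding D_def by simp
  then show ?thesis using \<rho> by blast
qed

definition threshold_lengths :: "nat \<Rightarrow> nat \<Rightarrow> (nat \<times> nat \<Rightarrow> nat) \<Rightarrow> bool" where
  "threshold_lengths k J m \<longleftrightarrow>
     (\<forall>r<k. \<forall>s<k. k * m (r,s) \<le> J + r + s \<and> J + r + s \<le> k * (m (r,s) + 1))"

lemma level_bounds:
  assumes "r < k" "s < k" "\<rho> \<le> k"
  shows "level k \<rho> i j r s \<in> {1,2,3}"
    and "(level k \<rho> i j r s - 1) * k \<le> r + s + \<rho>" and "r + s + \<rho> \<le> level k \<rho> i j r s * k"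
  using assms unfolding level_def by auto

lemma threshold_lengths_from_level_count:
  assumes "\<rho> \<le> k" "2 \<le> e" and count: "level_count k \<rho> i j = 2 ^ e"
  defines "m \<equiv> \<lambda>(r,s). e + level k \<rho> i j r s - 3"
  shows "(\<Sum>c\<in>alphabet_k k. (1/2::real) ^ m c) = 1"
    and "threshold_lengths k (\<rho> + k * (e - 2)) m"
proof -
  have kraft_term: "(1/2::real) ^ m (r,s) = 2 ^ (3 - level k \<rho> i j r s) / 2 ^ e"
    if "(r,s) \<in> alphabet_k k" for r s
  proof -
    define g where "g = level k \<rho> i j r s"
    have "g \<in> {1,2,3}" using level_bounds(1) that assms(1) unfolding g_def alphabet_k_def by auto
    then have "e = m (r,s) + (3 - g)" using assms(2) unfolding m_def g_def by auto
    then have "(2::real) ^ e = 2 ^ m (r,s) * 2 ^ (3 - g)" by (simp add: power_add)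
    then show ?thesis unfolding g_def by (simp add: field_simps power_one_over)
  qed
  have "(\<Sum>c\<in>alphabet_k k. (1/2::real) ^ m c) = (\<Sum>(r,s)\<in>alphabet_k k. 2 ^ (3 - level k \<rho> i j r s) / 2 ^ e)"
    using kraft_term by (intro sum.cong refl) auto
  also have "\<dots> = real (level_count k \<rho> i j) / 2 ^ e"
    unfolding level_count_def of_nat_sum sum_divide_distrib by (simp add: case_prod_beta)
  finally show "(\<Sum>c\<in>alphabet_k k. (1/2::real) ^ m c) = 1" using count by simp
  show "threshold_lengths k (\<rho> + k * (e - 2)) m"
    unfolding threshold_lengths_def
  proof (intro allI impI)
    fix r s assume rs: "r < k" "s < k"
    define g where "g = level k \<rho> i j r s"
    have "g \<in> {1,2,3}" "(g - 1) * k \<le> r + s + \<rho>" "r + s + \<rho> \<le> g * k"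
      using level_bounds[OF rs assms(1)] unfolding g_def by auto
    moreover have "m (r,s) = (e - 2) + (g - 1)" using assms(2) \<open>g \<in> {1,2,3}\<close> unfolding m_def g_def by auto
    ultimately show "k * m (r,s) \<le> \<rho> + k * (e - 2) + r + s \<and> \<rho> + k * (e - 2) + r + s \<le> k * (m (r,s) + 1)"
      by (auto simp: algebra_simps)
  qed
qed

text \<open>For every k there are threshold lengths on A_k whose Kraft sum is exactly one: choose the
  power of two 2^e between the scaled Kraft sums at the two extreme thresholds.\<close>
lemma kraft_tight_threshold_lengths:
  assumes "k \<ge> 1"
  obtains m J where "(\<Sum>c\<in>alphabet_k k. (1/2::real) ^ m c) = 1" and "threshold_lengths k J m"
proof -
  define X where "X = 2 * k\<^sup>2 + k * (k + 1)"
  have "4 \<le> X"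
  proof -
    have "1 \<le> k\<^sup>2" using assms by simp
    moreover have "1 * 2 \<le> k * (k + 1)" using assms by (intro mult_mono) auto
    ultimately show ?thesis unfolding X_def by linarith
  qed
  then obtain e where e: "2 ^ e \<le> X" "X < 2 ^ (e + 1)" using ex_power_ivl1[of 2 X] by auto
  have "2 \<le> e"
  proof (rule ccontr)
    assume "\<not> 2 \<le> e"
    then have "(2::nat) ^ (e + 1) \<le> 2 ^ 2" by (intro power_increasing) auto
    then show False using e(2) \<open>4 \<le> X\<close> by simp
  qed
  have "\<exists>\<rho> i j. 1 \<le> \<rho> \<and> \<rho> \<le> k \<and> level_count k \<rho> i j = 2 ^ e"
  proof (rule level_count_hits[OF assms])
    show "even ((2::nat) ^ e)" using \<open>2 \<le> e\<close> by simp
    show "level_count k (k + 1) 0 0 < 2 ^ e" using level_count_last[of k] e(2) unfolding X_def by simp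
    show "2 ^ e \<le> level_count k 1 0 0" using level_count_first[of k] e(1) unfolding X_def by simp
  qed
  then obtain \<rho> i j where "\<rho> \<le> k" "level_count k \<rho> i j = 2 ^ e" by blast
  from threshold_lengths_from_level_count[OF this(1) \<open>2 \<le> e\<close> this(2)] show ?thesis by (rule that)
qed

section \<open>Two one-dimensional inequalities\<close>

text \<open>The convex function n \<mapsto> y n + 2^-n on the naturals is minimal at L when
  2^-(L+1) \<le> y \<le> 2^-L; the two directions are instances of Bernoulli's inequality.\<close>
lemma geometric_dual_point:
  fixes y :: real and L n :: nat
  assumes lower: "(1/2) ^ (L + 1) \<le> y" and upper: "y \<le> (1/2) ^ L"
  shows "y * L + (1/2) ^ L \<le> y * n + (1/2) ^ n"
proof (cases "L \<le> n")
  case True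
  then obtain d where n: "n = L + d" using le_Suc_ex by blast
  have "1 + real d * (- 1/2) \<le> (1 + (- 1/2)) ^ d" by (rule Bernoulli_inequality) simp
  then have "1 - (1/2::real) ^ d \<le> d / 2" by simp
  then have "(1/2::real) ^ L * (1 - (1/2) ^ d) \<le> (1/2) ^ L * (d / 2)" by (intro mult_left_mono) auto
  also have "\<dots> = (1/2) ^ (L + 1) * d" by simp
  also have "\<dots> \<le> y * d" using lower by (intro mult_right_mono) auto
  finally show ?thesis unfolding n by (simp add: power_add algebra_simps)
next
  case False
  then obtain d where L: "L = n + d" by (metis le_add_diff_inverse nat_le_linear)
  have "1 + real d * 1 \<le> (1 + 1::real) ^ d" by (rule Bernoulli_inequality) simp
  then have "(1/2::real) ^ L * d \<le> (1/2) ^ L * (2 ^ d - 1)" by (intro mult_left_mono) auto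
  also have "\<dots> = (1/2) ^ n - (1/2) ^ L" unfolding L by (simp add: power_add field_simps)
  finally have "(1/2::real) ^ L * d \<le> (1/2) ^ n - (1/2) ^ L" .
  moreover have "y * d \<le> (1/2) ^ L * d" using upper by (intro mult_right_mono) auto
  ultimately show ?thesis unfolding L by (simp add: algebra_simps)
qed

lemma power_sandwich_half:
  fixes q :: real
  assumes "0 < q" "q < 1" "q ^ k = 1/2" and "k * L \<le> t" "t \<le> k * (L + 1)"
  shows "(1/2) ^ (L + 1) \<le> q ^ t" and "q ^ t \<le> (1/2) ^ L"
proof -
  have half: "q ^ (k * n) = (1/2) ^ n" for n by (simp add: power_mult assms(3))
  have "q ^ (k * (L + 1)) \<le> q ^ t" using assms by (intro power_decreasing) auto
  then show "(1/2) ^ (L + 1) \<le> q ^ t" by (simp only: half)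
  have "q ^ t \<le> q ^ (k * L)" using assms by (intro power_decreasing) auto
  then show "q ^ t \<le> (1/2) ^ L" by (simp only: half)
qed

section \<open>Sums over squares of blocks\<close>

text \<open>The square [0, kN) \<times> [0, kN), a union of N^2 translates of A_k.\<close>
definition grid :: "nat \<Rightarrow> nat \<Rightarrow> (nat \<times> nat) set" where
  "grid k N = {..<k * N} \<times> {..<k * N}"

lemma grid_sum_product:
  fixes f h :: "nat \<times> nat \<Rightarrow> 'a::comm_semiring_1"
  shows "(\<Sum>(i,j)\<in>grid k N. f (i mod k, j mod k) * h (i div k, j div k))
       = (\<Sum>c\<in>alphabet_k k. f c) * (\<Sum>ab\<in>{..<N} \<times> {..<N}. h ab)"
proof -
  define split where "split = (\<lambda>(i::nat, j::nat). ((i mod k, j mod k), (i div k, j div k)))"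
  define join where "join = (\<lambda>((r::nat, s::nat), (a::nat, b::nat)). (a * k + r, b * k + s))"
  have "(\<Sum>(i,j)\<in>grid k N. f (i mod k, j mod k) * h (i div k, j div k))
      = (\<Sum>(c, ab)\<in>alphabet_k k \<times> ({..<N} \<times> {..<N}). f c * h ab)"
  proof (rule sum.reindex_bij_witness[where i = join and j = split])
    fix x assume "x \<in> alphabet_k k \<times> ({..<N} \<times> {..<N})"
    then obtain r s a b where x: "x = ((r,s),(a,b))" "r < k" "s < k" "a < N" "b < N"
      unfolding alphabet_k_def by auto
    have block: "a' * k + r' < k * N" if "a' < N" "r' < k" for a' r'
    proof -
      have "a' * k + r' < Suc a' * k" using that by simp
      also have "\<dots> \<le> N * k" using that by (intro mult_right_mono) auto
      also have "\<dots> = k * N" by simp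
      finally show ?thesis .
    qed
    have "a * k + r < k * N" "b * k + s < k * N" using x by (simp_all add: block)
    then show "join x \<in> grid k N" unfolding join_def grid_def x by simp
    show "split (join x) = x" unfolding join_def split_def x using x by simp
  next
    fix y assume "y \<in> grid k N"
    then obtain i j where y: "y = (i,j)" "i < k * N" "j < k * N" unfolding grid_def by auto
    then have "k > 0" by (cases k) auto
    show "join (split y) = y" unfolding join_def split_def y by simp
    show "split y \<in> alphabet_k k \<times> ({..<N} \<times> {..<N})"
      unfolding split_def y alphabet_k_def using y \<open>k > 0\<close>
      by (auto simp: less_mult_imp_div_less mult.commute)
    show "(case split y of (c, ab) \<Rightarrow> f c * h ab)
        = (case y of (i, j) \<Rightarrow> f (i mod k, j mod k) * h (i div k, j div k))"
      unfolding join_def split_def y by simp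
  qed
  also have "\<dots> = (\<Sum>c\<in>alphabet_k k. f c) * (\<Sum>ab\<in>{..<N} \<times> {..<N}. h ab)"
    by (simp add: sum.cartesian_product[symmetric] sum_product)
  finally show ?thesis .
qed

lemma TDGD_block:
  fixes q :: real
  assumes "q ^ k = 1/2"
  shows "TDGD q (i,j) = q ^ (i mod k + j mod k) * ((1 - q)\<^sup>2 * (1/2) ^ (i div k + j div k))"
proof -
  have split: "q ^ n = (1/2) ^ (n div k) * q ^ (n mod k)" for n
  proof -
    have "q ^ n = q ^ (k * (n div k) + n mod k)" by simp
    also have "\<dots> = (1/2) ^ (n div k) * q ^ (n mod k)" by (simp only: power_add power_mult assms)
    finally show ?thesis .
  qed
  show ?thesis unfolding TDGD_def using split[of i] split[of j] by (simp add: power_add)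
qed

lemma grid_cost_le_of_weighted_len:
  fixes q :: real
  assumes "q ^ k = 1/2" and "weighted_len_k k q c1 \<le> weighted_len_k k q c2"
  shows "(\<Sum>x\<in>grid k N. TDGD q x * length (tdgd_code k c1 x))
       \<le> (\<Sum>x\<in>grid k N. TDGD q x * length (tdgd_code k c2 x))"
proof -
  define f where "f = (\<lambda>(r,s). q ^ (r + s) * (real (length (c1 (r,s))) - real (length (c2 (r,s)))))"
  define h where "h = (\<lambda>(a::nat,b::nat). (1 - q)\<^sup>2 * (1/2::real) ^ (a + b))"
  have "(\<Sum>x\<in>grid k N. TDGD q x * length (tdgd_code k c1 x)) - (\<Sum>x\<in>grid k N. TDGD q x * length (tdgd_code k c2 x))
      = (\<Sum>(i,j)\<in>grid k N. f (i mod k, j mod k) * h (i div k, j div k))"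
    unfolding sum_subtractf[symmetric]
    by (intro sum.cong refl)
       (auto simp: f_def h_def TDGD_block[OF assms(1)] length_tdgd_code block_len_def algebra_simps)
  also have "\<dots> = (\<Sum>c\<in>alphabet_k k. f c) * (\<Sum>ab\<in>{..<N} \<times> {..<N}. h ab)"
    by (rule grid_sum_product)
  also have "\<dots> \<le> 0"
  proof (rule mult_nonpos_nonneg)
    show "(\<Sum>c\<in>alphabet_k k. f c) \<le> 0"
      using assms(2) unfolding weighted_len_k_def f_def
      by (simp add: case_prod_beta right_diff_distrib sum_subtractf)
    show "0 \<le> (\<Sum>ab\<in>{..<N} \<times> {..<N}. h ab)" unfolding h_def by (intro sum_nonneg) auto
  qed
  finally show ?thesis by simp
qed

lemma grid_kraft_sum:
  assumes "(\<Sum>c\<in>alphabet_k k. (1/2::real) ^ m c) = 1"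
  shows "(\<Sum>x\<in>grid k N. (1/2::real) ^ block_len k m x) = (1 - (1/2) ^ N)\<^sup>2"
proof -
  have geometric: "(\<Sum>a<N. (1/2::real) ^ (a + 1)) = 1 - (1/2) ^ N"
    by (induction N) (simp_all add: field_simps)
  have "(\<Sum>x\<in>grid k N. (1/2::real) ^ block_len k m x)
      = (\<Sum>(i,j)\<in>grid k N. (1/2) ^ m (i mod k, j mod k) * (1/2) ^ (i div k + j div k + 2))"
    by (intro sum.cong refl) (auto simp: block_len_def power_add)
  also have "\<dots> = (\<Sum>c\<in>alphabet_k k. (1/2) ^ m c) * (\<Sum>(a,b)\<in>{..<N} \<times> {..<N}. (1/2) ^ (a + b + 2))"
    using grid_sum_product[where f = "\<lambda>c. (1/2::real) ^ m c" and h = "\<lambda>(a,b). (1/2) ^ (a + b + 2)"]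
    by (simp add: case_prod_beta)
  also have "(\<Sum>(a,b)\<in>{..<N} \<times> {..<N}. (1/2::real) ^ (a + b + 2))
      = (\<Sum>a<N. (1/2::real) ^ (a + 1)) * (\<Sum>b<N. (1/2) ^ (b + 1))"
    by (simp add: sum.cartesian_product[symmetric] sum_product power_add)
  finally show ?thesis by (simp only: assms geometric power2_eq_square mult_1)
qed

section \<open>From truncated sums to expected lengths\<close>

lemma TDGD_nonneg: "0 \<le> q \<Longrightarrow> 0 \<le> TDGD q x"
  by (cases x) (simp add: TDGD_def)

lemma grid_mono: "N \<le> M \<Longrightarrow> grid k N \<subseteq> grid k M"
  unfolding grid_def by (auto intro: less_le_trans)

lemma finite_grid: "finite (grid k N)"
  by (simp add: grid_def)

lemma sum_le_nn_integral_count_space: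
  fixes g :: "'a \<Rightarrow> real"
  assumes "finite F" "\<And>x. 0 \<le> g x"
  shows "ennreal (\<Sum>x\<in>F. g x) \<le> (\<integral>\<^sup>+x. ennreal (g x) \<partial>count_space UNIV)"
proof -
  have "ennreal (\<Sum>x\<in>F. g x) = (\<integral>\<^sup>+x. ennreal (g x) \<partial>count_space F)"
    using assms by (simp add: nn_integral_count_space_finite sum_ennreal)
  also have "\<dots> = (\<integral>\<^sup>+x. ennreal (g x) * indicator F x \<partial>count_space UNIV)"
    by (simp add: nn_integral_count_space_indicator)
  also have "\<dots> \<le> (\<integral>\<^sup>+x. ennreal (g x) \<partial>count_space UNIV)"
    by (intro nn_integral_mono) (simp add: indicator_def)
  finally show ?thesis .
qed

lemma nn_integral_count_space_grid_SUP:
  fixes g :: "nat \<times> nat \<Rightarrow> real"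
  assumes "k \<ge> 1" and "\<And>x. 0 \<le> g x"
  shows "(\<integral>\<^sup>+x. ennreal (g x) \<partial>count_space UNIV) = (SUP N. ennreal (\<Sum>x\<in>grid k N. g x))"
proof -
  define f where "f N x = ennreal (g x) * indicator (grid k N) x" for N x
  have "incseq f"
    unfolding incseq_def le_fun_def f_def using grid_mono by (auto simp: indicator_def)
  have exhaust: "(SUP N. f N x) = ennreal (g x)" for x
  proof (rule antisym)
    show "(SUP N. f N x) \<le> ennreal (g x)" by (rule SUP_least) (simp add: f_def indicator_def)
    obtain i j where x: "x = (i,j)" by fastforce
    have "1 * Suc (max i j) \<le> k * Suc (max i j)" using assms(1) by (rule mult_right_mono) simp
    then have "i < k * Suc (max i j)" "j < k * Suc (max i j)" by simp_all
    then have "f (Suc (max i j)) x = ennreal (g x)" by (simp add: f_def grid_def x)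
    then show "ennreal (g x) \<le> (SUP N. f N x)" by (metis SUP_upper UNIV_I)
  qed
  have "(\<integral>\<^sup>+x. ennreal (g x) \<partial>count_space UNIV) = (SUP N. integral\<^sup>N (count_space UNIV) (f N))"
    unfolding exhaust[symmetric] by (rule nn_integral_monotone_convergence_SUP[OF \<open>incseq f\<close>]) simp
  also have "\<dots> = (SUP N. ennreal (\<Sum>x\<in>grid k N. g x))"
    using assms(2) unfolding f_def
    by (simp add: nn_integral_count_space_indicator[symmetric] nn_integral_count_space_finite
        finite_grid sum_ennreal)
  finally show ?thesis .
qed

section \<open>Optimality of codes with threshold lengths\<close>

lemma threshold_dual_pointwise:
  fixes q :: real
  assumes q: "0 < q" "q < 1" "q ^ k = 1/2" and "k \<ge> 1" and thr: "threshold_lengths k J m"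
  defines "lam \<equiv> (1 - q)\<^sup>2 * (1/q) ^ (J + 2 * k)"
  shows "TDGD q x * block_len k m x + lam * (1/2) ^ block_len k m x \<le> TDGD q x * n + lam * (1/2) ^ n"
proof -
  obtain i j where x: "x = (i,j)" by fastforce
  define L where "L = block_len k m x"
  define t where "t = J + 2 * k + (i + j)"
  define r s a b where "r = i mod k" and "s = j mod k" and "a = i div k" and "b = j div k"
  have ij: "i = k * a + r" "j = k * b + s" unfolding r_def s_def a_def b_def by simp_all
  have L: "L = m (r,s) + a + b + 2" unfolding L_def x block_len_def r_def s_def a_def b_def by simp
  have "k * m (r,s) \<le> J + r + s" "J + r + s \<le> k * (m (r,s) + 1)"
    using thr \<open>k \<ge> 1\<close> unfolding threshold_lengths_def r_def s_def by auto
  then have "k * L \<le> t" "t \<le> k * (L + 1)"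
    unfolding L t_def ij by (simp_all add: algebra_simps)
  then have "q ^ t * L + (1/2) ^ L \<le> q ^ t * n + (1/2) ^ n"
    using geometric_dual_point power_sandwich_half[OF q] by blast
  moreover have "0 \<le> lam" unfolding lam_def using q(1) by simp
  ultimately have "lam * (q ^ t * L + (1/2) ^ L) \<le> lam * (q ^ t * n + (1/2) ^ n)"
    by (rule mult_left_mono)
  moreover have weight: "TDGD q x = lam * q ^ t"
    using q(1) unfolding lam_def t_def TDGD_def x by (simp add: power_add power_one_over field_simps)
  ultimately show ?thesis unfolding L_def[symmetric] weight by (simp add: algebra_simps)
qed

text \<open>Summing the pointwise inequality over a square and using the two Kraft sums: on every square
  the cost of the threshold construction exceeds that of any prefix code by at most 2 lam 2^-N.\<close>
lemma threshold_truncated_bound: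
  fixes q :: real
  assumes q: "0 < q" "q < 1" "q ^ k = 1/2" and "k \<ge> 1"
    and kraft: "(\<Sum>c\<in>alphabet_k k. (1/2::real) ^ m c) = 1" and thr: "threshold_lengths k J m"
    and d: "prefix_code UNIV d"
  defines "lam \<equiv> (1 - q)\<^sup>2 * (1/q) ^ (J + 2 * k)"
  shows "(\<Sum>x\<in>grid k N. TDGD q x * block_len k m x)
       \<le> (\<Sum>x\<in>grid k N. TDGD q x * length (d x)) + 2 * lam * (1/2) ^ N"
proof -
  define h :: real where "h = (1/2) ^ N"
  have lam: "0 \<le> lam" unfolding lam_def using q(1) by simp
  have "(\<Sum>x\<in>grid k N. TDGD q x * block_len k m x) + lam * (1 - h)\<^sup>2
      = (\<Sum>x\<in>grid k N. TDGD q x * block_len k m x + lam * (1/2) ^ block_len k m x)"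
    unfolding h_def grid_kraft_sum[OF kraft, symmetric] by (simp add: sum.distrib sum_distrib_left)
  also have "\<dots> \<le> (\<Sum>x\<in>grid k N. TDGD q x * length (d x) + lam * (1/2) ^ length (d x))"
    by (intro sum_mono) (unfold lam_def, rule threshold_dual_pointwise[OF q \<open>k \<ge> 1\<close> thr])
  also have "\<dots> = (\<Sum>x\<in>grid k N. TDGD q x * length (d x)) + lam * (\<Sum>x\<in>grid k N. (1/2) ^ length (d x))"
    by (simp add: sum.distrib sum_distrib_left)
  also have "\<dots> \<le> (\<Sum>x\<in>grid k N. TDGD q x * length (d x)) + lam * 1"
    using kraft_inequality[OF d finite_grid] lam by (intro add_left_mono mult_left_mono) auto
  finally have "(\<Sum>x\<in>grid k N. TDGD q x * block_len k m x)
      \<le> (\<Sum>x\<in>grid k N. TDGD q x * length (d x)) + lam * (2 * h - h\<^sup>2)"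
    by (simp add: power2_eq_square algebra_simps)
  also have "lam * (2 * h - h\<^sup>2) \<le> 2 * lam * h" using lam by (simp add: algebra_simps)
  finally show ?thesis unfolding h_def by simp
qed

lemma SUP_le_of_approximation:
  fixes a b :: "nat \<Rightarrow> real" and c :: real and E :: ennreal
  assumes "mono a" and approx: "\<And>N. a N \<le> b N + c * (1/2) ^ N"
    and "\<And>N. 0 \<le> b N" and bound: "\<And>N. ennreal (b N) \<le> E" and "0 \<le> c"
  shows "(SUP N. ennreal (a N)) \<le> E"
proof (rule SUP_least, rule ennreal_le_epsilon)
  fix N and e :: real assume "0 < e"
  obtain M0 where M0: "(1/2::real) ^ M0 < e / (c + 1)"
    using real_arch_pow_inv[of "e / (c + 1)" "1/2"] \<open>0 < e\<close> \<open>0 \<le> c\<close> by auto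
  define M where "M = max N M0"
  have "(1/2::real) ^ M \<le> (1/2) ^ M0" by (rule power_decreasing) (auto simp: M_def)
  with M0 have "(1/2::real) ^ M \<le> e / (c + 1)" by linarith
  then have "c * (1/2::real) ^ M \<le> c * (e / (c + 1))" using \<open>0 \<le> c\<close> by (rule mult_left_mono)
  also have "\<dots> \<le> e" using \<open>0 < e\<close> \<open>0 \<le> c\<close> by (simp add: field_simps)
  finally have "a N \<le> b M + e"
    using monoD[OF \<open>mono a\<close>, of N M] approx[of M] by (simp add: M_def)
  then have "ennreal (a N) \<le> ennreal (b M) + ennreal e"
    using assms(3)[of M] \<open>0 < e\<close> by (simp add: ennreal_plus[symmetric] del: ennreal_plus)
  also have "\<dots> \<le> E + ennreal e" using bound by (rule add_right_mono)
  finally show "ennreal (a N) \<le> E + ennreal e" .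
qed

lemma expected_len_grid_SUP:
  assumes "k \<ge> 1" and "0 \<le> q"
  shows "expected_len q c = (SUP N. ennreal (\<Sum>x\<in>grid k N. TDGD q x * length (c x)))"
  unfolding expected_len_def
  by (rule nn_integral_count_space_grid_SUP[OF assms(1)]) (simp add: TDGD_nonneg[OF assms(2)])

lemma grid_cost_mono:
  assumes "0 \<le> q"
  shows "mono (\<lambda>N. \<Sum>x\<in>grid k N. TDGD q x * length (c x))"
  by (intro monoI sum_mono2 finite_grid grid_mono) (simp_all add: TDGD_nonneg[OF assms])

lemma expected_len_tdgd_code_mono:
  fixes q :: real
  assumes "0 < q" "q ^ k = 1/2" "k \<ge> 1" and "weighted_len_k k q c1 \<le> weighted_len_k k q c2"
  shows "expected_len q (tdgd_code k c1) \<le> expected_len q (tdgd_code k c2)"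
  unfolding expected_len_grid_SUP[OF \<open>k \<ge> 1\<close> less_imp_le[OF \<open>0 < q\<close>]]
  by (intro SUP_mono' ennreal_leI grid_cost_le_of_weighted_len[OF assms(2,4)])

lemma threshold_code_optimal:
  fixes q :: real
  assumes q: "0 < q" "q < 1" "q ^ k = 1/2" and "k \<ge> 1"
    and kraft: "(\<Sum>c\<in>alphabet_k k. (1/2::real) ^ m c) = 1" and thr: "threshold_lengths k J m"
    and len: "\<forall>c\<in>alphabet_k k. length (code c) = m c"
    and d: "prefix_code UNIV d"
  shows "expected_len q (tdgd_code k code) \<le> expected_len q d"
proof -
  have block: "length (tdgd_code k code x) = block_len k m x" for x
    using len \<open>k \<ge> 1\<close> by (cases x) (simp add: length_tdgd_code block_len_def alphabet_k_def)
  define lam where "lam = (1 - q)\<^sup>2 * (1/q) ^ (J + 2 * k)"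
  define cost_d where "cost_d N = (\<Sum>x\<in>grid k N. TDGD q x * length (d x))" for N
  have "expected_len q (tdgd_code k code)
      = (SUP N. ennreal (\<Sum>x\<in>grid k N. TDGD q x * length (tdgd_code k code x)))"
    using expected_len_grid_SUP \<open>k \<ge> 1\<close> q(1) by simp
  also have "\<dots> \<le> expected_len q d"
  proof (rule SUP_le_of_approximation[where b = cost_d and c = "2 * lam"])
    show "mono (\<lambda>N. \<Sum>x\<in>grid k N. TDGD q x * length (tdgd_code k code x))"
      using q(1) by (simp add: grid_cost_mono)
    show "(\<Sum>x\<in>grid k N. TDGD q x * length (tdgd_code k code x)) \<le> cost_d N + 2 * lam * (1/2) ^ N"
      for N unfolding block cost_d_def lam_def by (rule threshold_truncated_bound[OF q \<open>k \<ge> 1\<close> kraft thr d])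
    show "0 \<le> cost_d N" for N
      unfolding cost_d_def using q(1) by (intro sum_nonneg) (simp add: TDGD_nonneg)
    show "ennreal (cost_d N) \<le> expected_len q d" for N
      unfolding expected_len_def cost_d_def using q(1)
      by (intro sum_le_nn_integral_count_space finite_grid) (simp add: TDGD_nonneg)
    show "0 \<le> 2 * lam" unfolding lam_def using q(1) by simp
  qed
  finally show ?thesis .
qed

theorem theorem2:
  fixes k :: nat and T :: "nat \<times> nat \<Rightarrow> bool list"
  assumes "k \<ge> 1"
    and "optimal_finite_code k (2 powr (- 1 / real k)) T"
  shows "optimal_TDGD (2 powr (- 1 / real k))
           (\<lambda>(i,j). T (i mod k, j mod k) @ unary (i div k) @ unary (j div k))"
proof -
  define q where "q = (2::real) powr (- 1 / real k)"
  have q: "0 < q" "q < 1" using \<open>k \<ge> 1\<close> unfolding q_def by (auto intro: powr_less_one)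
  have "q ^ k = 2 powr (real k * (- 1 / real k))" unfolding q_def by (simp add: powr_power)
  then have qk: "q ^ k = 1/2" using \<open>k \<ge> 1\<close> by (simp add: powr_minus_divide)
  have T: "prefix_code (alphabet_k k) T"
    "\<And>c. prefix_code (alphabet_k k) c \<Longrightarrow> weighted_len_k k q T \<le> weighted_len_k k q c"
    using assms(2) unfolding optimal_finite_code_def q_def by auto
  obtain m J where kraft: "(\<Sum>c\<in>alphabet_k k. (1/2::real) ^ m c) = 1" and thr: "threshold_lengths k J m"
    using kraft_tight_threshold_lengths[OF \<open>k \<ge> 1\<close>] .
  obtain code where code: "prefix_code (alphabet_k k) code" "\<forall>c\<in>alphabet_k k. length (code c) = m c"
    using kraft_converse[OF finite_alphabet_k[of k], of m] kraft by auto
  have "optimal_TDGD q (tdgd_code k T)"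
    unfolding optimal_TDGD_def
  proof (intro conjI allI impI)
    show "prefix_code UNIV (tdgd_code k T)" using tdgd_code_prefix_code[OF \<open>k \<ge> 1\<close> T(1)] .
    fix d :: "nat \<times> nat \<Rightarrow> bool list" assume "prefix_code UNIV d"
    have "expected_len q (tdgd_code k T) \<le> expected_len q (tdgd_code k code)"
      using expected_len_tdgd_code_mono[OF q(1) qk \<open>k \<ge> 1\<close> T(2)[OF code(1)]] .
    also have "\<dots> \<le> expected_len q d"
      using threshold_code_optimal[OF q qk \<open>k \<ge> 1\<close> kraft thr code(2) \<open>prefix_code UNIV d\<close>] .
    finally show "expected_len q (tdgd_code k T) \<le> expected_len q d" .
  qed
  then show ?thesis unfolding q_def tdgd_code_def .
qed

end
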